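(* Let $c\ge1$, $\lambda_1,\lambda_2,\mu_1,\mu_2>0$, let $X$ be the Markov chain described in the context, fix $\alpha$ with $\mathrm{Re}\,\alpha>0$, and let $G(\alpha)=G_{c,c-1}(\alpha)$. Then $$G(\alpha)=\bigl(\alpha I-A_0-W_0(\alpha)\bigr)^{-1}\Bigl(A_{-1}+A_1G(\alpha)^2+\sum_{l=1}^{\infty}W_l(\alpha)G(\alpha)^{l+1}\Bigr).$$
   Context: The Markov chain $X$ on $\mathbb{N}_0^2$ has only nonzero off-diagonal rates $q((i,j),(i+1,j))=\lambda_1$, $q((i,j),(i,j+1))=\lambda_2$ ($i,j\ge0$), $q((i,j),(i-1,j))=\max(\min(i,c-j),0)\mu_1$ ($i\ge1$), $q((i,j),(i,j-1))=\min(c,j)\mu_2$ ($j\ge1$). For $A\subset\mathbb{N}_0^2$, $\tau_A=\inf\{t>0:X(t^-)\ne X(t)\in A\}$; $E_z$ is expectation given $X(0)=z$. $L_i=\{(i,0),\dots,(i,c-1)\}$. Matrices are $c\times c$ with indices $0,\dots,c-1$. $(G_{c,c-1}(\alpha))_{k,l}=E_{(c,k)}[e^{-\alpha\tau_{L_{c-1}}}\mathbf{1}\{X(\tau_{L_{c-1}})=(c-1,l)\}]$. $A_1=\lambda_1I$; $A_{-1}=\mathrm{diag}((c-j)\mu_1)_{j=0}^{c-1}$; $A_0$ is tridiagonal with $(A_0)_{j,j+1}=\lambda_2$ ($0\le j\le c-2$), $(A_0)_{j,j-1}=j\mu_2$ ($1\le j\le c-1$), $(A_0)_{j,j}=-(\lambda_2+j\mu_2+\lambda_1+(c-j)\mu_1)$.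 For $\lambda,\mu,\theta>0$, $w^{\lambda,\mu,\theta}_m(\alpha)=E[e^{-\alpha B}\mathbf{1}\{\Lambda_\theta(B)=m\}]$, $B$ the busy period of an $M/M/1$ queue (arrival rate $\lambda$, service rate $\mu$) started with one customer, $\Lambda_\theta$ an independent rate-$\theta$ Poisson process. $W_m(\alpha)$ has only nonzero entry $(W_m(\alpha))_{c-1,c-1}=\lambda_2w^{\lambda_2,c\mu_2,\lambda_1}_m(\alpha)$. *)

theory Defs
  imports "HOL-Analysis.Infinite_Sum" "Jordan_Normal_Form.Matrix"
begin

text \<open>A CTMC on a countable state type is given by its off-diagonal rates q z z'
 (the diagonal value q z z is ignored). The total exit rate of z:\<close>
definition out_rate :: "('a \<Rightarrow> 'a \<Rightarrow> real) \<Rightarrow> 'a \<Rightarrow> real" where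
  "out_rate q z = (\<Sum>\<^sub>\<infinity> z'\<in>UNIV - {z}. q z z')"

text \<open>Weight of the jump sequence z -> z1 -> ... -> zn (list [z1,...,zn]):
 product of the jump probabilities q(z_k,z_{k+1})/q(z_k) times the Laplace transforms
 q(z_k)/(q(z_k)+alpha) of the exponential holding times.\<close>
fun path_weight :: "('a \<Rightarrow> 'a \<Rightarrow> real) \<Rightarrow> complex \<Rightarrow> 'a \<Rightarrow> 'a list \<Rightarrow> complex" where
  "path_weight q \<alpha> z [] = 1"
| "path_weight q \<alpha> z (z' # p) =
     (if z' = z then 0 else complex_of_real (q z z') / (complex_of_real (out_rate q z) + \<alpha>))
     * path_weight q \<alpha> z' p"

text \<open>hit_LT q alpha A z y = E_z[exp(-alpha tau_A) 1{X(tau_A) = y}], where tau_A is the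
 first time t>0 at which the chain jumps into A; written as the sum over all jump
 sequences that enter A for the first time (after time 0) at y.\<close>
definition hit_LT :: "('a \<Rightarrow> 'a \<Rightarrow> real) \<Rightarrow> complex \<Rightarrow> 'a set \<Rightarrow> 'a \<Rightarrow> 'a \<Rightarrow> complex" where
  "hit_LT q \<alpha> A z y =
     (\<Sum>\<^sub>\<infinity> p\<in>{p. p \<noteq> [] \<and> last p = y \<and> y \<in> A \<and> set (butlast p) \<inter> A = {}}.
        path_weight q \<alpha> z p)"

definition Xrate :: "nat \<Rightarrow> real \<Rightarrow> real \<Rightarrow> real \<Rightarrow> real \<Rightarrow> nat \<times> nat \<Rightarrow> nat \<times> nat \<Rightarrow> real" where
  "Xrate c la1 la2 mu1 mu2 z z' =
     (let i = fst z; j = snd z in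
      if z' = (i + 1, j) then la1
      else if z' = (i, j + 1) then la2
      else if i \<ge> 1 \<and> z' = (i - 1, j) then max (min (real i) (real c - real j)) 0 * mu1
      else if j \<ge> 1 \<and> z' = (i, j - 1) then min (real c) (real j) * mu2
      else 0)"

definition level :: "nat \<Rightarrow> nat \<Rightarrow> (nat \<times> nat) set" where
  "level c i = {(i, j) | j. j < c}"

definition Gmat :: "nat \<Rightarrow> real \<Rightarrow> real \<Rightarrow> real \<Rightarrow> real \<Rightarrow> complex \<Rightarrow> complex mat" where
  "Gmat c la1 la2 mu1 mu2 \<alpha> =
     mat c c (\<lambda>(k, l). hit_LT (Xrate c la1 la2 mu1 mu2) \<alpha> (level c (c - 1)) (c, k) (c - 1, l))"

definition A1mat :: "nat \<Rightarrow> real \<Rightarrow> complex mat" where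
  "A1mat c la1 = complex_of_real la1 \<cdot>\<^sub>m 1\<^sub>m c"

definition Am1mat :: "nat \<Rightarrow> real \<Rightarrow> complex mat" where
  "Am1mat c mu1 = mat c c (\<lambda>(j, k). if j = k then complex_of_real ((real c - real j) * mu1) else 0)"

definition A0mat :: "nat \<Rightarrow> real \<Rightarrow> real \<Rightarrow> real \<Rightarrow> real \<Rightarrow> complex mat" where
  "A0mat c la1 la2 mu1 mu2 = mat c c (\<lambda>(j, k).
     if k = j + 1 then complex_of_real la2
     else if j = k + 1 then complex_of_real (real j * mu2)
     else if j = k then complex_of_real (-(la2 + real j * mu2 + la1 + (real c - real j) * mu1))
     else 0)"

text \<open>Joint CTMC (queue length n, count k of an independent rate-theta Poisson process)
 for an M/M/1 queue with arrival rate lambda and service rate mu.\<close>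
definition MM1rate :: "real \<Rightarrow> real \<Rightarrow> real \<Rightarrow> nat \<times> nat \<Rightarrow> nat \<times> nat \<Rightarrow> real" where
  "MM1rate lam mu th z z' =
     (let n = fst z; k = snd z in
      if z' = (n + 1, k) then lam
      else if n \<ge> 1 \<and> z' = (n - 1, k) then mu
      else if z' = (n, k + 1) then th
      else 0)"

text \<open>w_m^{lambda,mu,theta}(alpha) = E[exp(-alpha B) 1{Lambda_theta(B) = m}], B the busy
 period started with one customer = first time the queue length hits 0.\<close>
definition busy_w :: "real \<Rightarrow> real \<Rightarrow> real \<Rightarrow> nat \<Rightarrow> complex \<Rightarrow> complex" where
  "busy_w lam mu th m \<alpha> = hit_LT (MM1rate lam mu th) \<alpha> {z. fst z = 0} (1, 0) (0, m)"

definition Wmat :: "nat \<Rightarrow> real \<Rightarrow> real \<Rightarrow> real \<Rightarrow> nat \<Rightarrow> complex \<Rightarrow> complex mat" where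
  "Wmat c la1 la2 mu2 m \<alpha> = mat c c (\<lambda>(k, l).
     if k = c - 1 \<and> l = c - 1 then complex_of_real la2 * busy_w la2 (real c * mu2) la1 m \<alpha> else 0)"

end

theory Submission
  imports Defs "Jordan_Normal_Form.Determinant"
begin

text \<open>
  First-step analysis from the states \<open>(c, k)\<close> of level \<open>c\<close>. A jump to level \<open>c + 1\<close> must
  be followed by two passages down one level; above level \<open>c - 1\<close> the dynamics are invariant
  under shifting the first coordinate, so a passage from level \<open>c - 1 + n\<close> to \<open>c - 1\<close> has
  transform \<open>G\<^sup>n\<close> and this jump contributes \<open>A\<^sub>1 G\<^sup>2\<close>. Jumps inside level \<open>c\<close> and down to
  level \<open>c - 1\<close> give \<open>A\<^sub>0\<close> and \<open>A\<^sub>-\<^sub>1\<close>. From \<open>(c, c - 1)\<close> a \<open>\<lambda>\<^sub>2\<close>-jump starts a busy period of the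
  second coordinate, an M/M/1 queue with service rate \<open>c \<mu>\<^sub>2\<close>; if \<open>m\<close> \<open>\<lambda>\<^sub>1\<close>-jumps occur meanwhile,
  \<open>m + 1\<close> level passages remain, which gives \<open>W\<^sub>m G\<^sup>m\<^sup>+\<^sup>1\<close>. The term \<open>m = 0\<close> is moved to the
  left, and \<open>\<alpha> I - A\<^sub>0 - W\<^sub>0\<close> is invertible because it is strictly diagonally dominant.

  Transforms of first-entry times are absolutely convergent sums of path weights of total mass
  at most 1, the strong Markov property becomes a bijection between paths and their splittings
  at the first entry into an intermediate set, and the shift invariance and the busy period are
  transported along injective relabellings of the state space.
\<close>

section \<open>Transforms of first-entry times as sums over paths\<close>

definition nonneg_finite_rates :: "('a \<Rightarrow> 'a \<Rightarrow> real) \<Rightarrow> bool" where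
  "nonneg_finite_rates q \<longleftrightarrow> (\<forall>z z'. q z z' \<ge> 0) \<and> (\<forall>z. finite {z'. q z z' \<noteq> 0})"

definition jump_weight :: "('a \<Rightarrow> 'a \<Rightarrow> real) \<Rightarrow> complex \<Rightarrow> 'a \<Rightarrow> 'a \<Rightarrow> complex" where
  "jump_weight q \<alpha> z v =
     (if v = z then 0 else complex_of_real (q z v) / (complex_of_real (out_rate q z) + \<alpha>))"

lemma path_weight_Cons [simp]:
  "path_weight q \<alpha> z (v # p) = jump_weight q \<alpha> z v * path_weight q \<alpha> v p"
  by (simp add: jump_weight_def)

declare path_weight.simps(2) [simp del]

lemma path_weight_append:
  "path_weight q \<alpha> z (xs @ ys) = path_weight q \<alpha> z xs * path_weight q \<alpha> (last (z # xs)) ys"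
  by (induction xs arbitrary: z) (auto simp: mult.assoc)

definition entry_paths :: "'a set \<Rightarrow> 'a list set" where
  "entry_paths A = {p. p \<noteq> [] \<and> last p \<in> A \<and> set (butlast p) \<inter> A = {}}"

definition entry_paths_to :: "'a set \<Rightarrow> 'a \<Rightarrow> 'a list set" where
  "entry_paths_to A y = {p. p \<noteq> [] \<and> last p = y \<and> y \<in> A \<and> set (butlast p) \<inter> A = {}}"

lemma hit_LT_eq_infsum: "hit_LT q \<alpha> A z y = infsum (path_weight q \<alpha> z) (entry_paths_to A y)"
  unfolding hit_LT_def entry_paths_to_def by simp

lemma entry_paths_to_subset: "entry_paths_to A y \<subseteq> entry_paths A"
  unfolding entry_paths_to_def entry_paths_def by auto

lemma Cons_in_entry_paths:
  "v # r \<in> entry_paths A \<longleftrightarrow> (r = [] \<and> v \<in> A) \<or> (v \<notin> A \<and> r \<in> entry_paths A)"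
  unfolding entry_paths_def by (cases r) auto

lemma out_rate_eq_sum:
  assumes "finite S" and "\<And>v. q z v \<noteq> 0 \<Longrightarrow> v \<in> S"
  shows "out_rate q z = sum (q z) (S - {z})"
proof -
  have "out_rate q z = infsum (q z) (S - {z})"
    unfolding out_rate_def by (rule infsum_cong_neutral) (use assms in auto)
  then show ?thesis using assms by simp
qed

lemma out_rate_nonneg: "nonneg_finite_rates q \<Longrightarrow> out_rate q z \<ge> 0"
  unfolding out_rate_def nonneg_finite_rates_def by (simp add: infsum_nonneg)

lemma sum_norm_jump_weight_le_1:
  assumes q: "nonneg_finite_rates q" and \<alpha>: "Re \<alpha> > 0" and V: "finite V"
  shows "(\<Sum>v\<in>V. cmod (jump_weight q \<alpha> z v)) \<le> 1"
proof -
  define S where "S = {z'. q z z' \<noteq> 0} - {z}"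
  define D where "D = cmod (complex_of_real (out_rate q z) + \<alpha>)"
  have S: "finite S" using q unfolding nonneg_finite_rates_def S_def by auto
  have out: "out_rate q z = sum (q z) S"
    unfolding S_def by (rule out_rate_eq_sum) (use q in \<open>auto simp: nonneg_finite_rates_def\<close>)
  have "out_rate q z + Re \<alpha> \<le> D"
    using complex_Re_le_cmod[of "complex_of_real (out_rate q z) + \<alpha>"] unfolding D_def by simp
  moreover have "out_rate q z \<ge> 0" using out_rate_nonneg[OF q] .
  ultimately have D: "D > 0" "out_rate q z \<le> D" using \<alpha> by linarith+
  have "cmod (jump_weight q \<alpha> z v) = (if v \<in> S then q z v / D else 0)" for v
    using q unfolding jump_weight_def D_def S_def nonneg_finite_rates_def by (auto simp: norm_divide)
  then have "(\<Sum>v\<in>V. cmod (jump_weight q \<alpha> z v)) = (\<Sum>v\<in>V \<inter> S. q z v / D)"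
    using V by (simp add: sum.If_cases Int_def)
  also have "\<dots> \<le> (\<Sum>v\<in>S. q z v / D)"
    using S q D by (intro sum_mono2) (auto simp: nonneg_finite_rates_def)
  also have "\<dots> = out_rate q z / D" by (simp add: out sum_divide_distrib)
  also have "\<dots> \<le> 1" using D by simp
  finally show ?thesis .
qed

lemma sum_norm_path_weight_by_first_jump:
  assumes "finite F" and "[] \<notin> F"
  shows "(\<Sum>p\<in>F. cmod (path_weight q \<alpha> z p))
    = (\<Sum>v\<in>hd ` F. cmod (jump_weight q \<alpha> z v) * (\<Sum>r\<in>Cons v -` F. cmod (path_weight q \<alpha> v r)))"
proof -
  let ?R = "\<lambda>v. Cons v -` F"
  have F_eq: "F = (\<lambda>(v, r). v # r) ` Sigma (hd ` F) ?R"
  proof (intro equalityI subsetI)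
    fix p assume p: "p \<in> F"
    with assms(2) obtain v r where "p = v # r" by (cases p) auto
    with p show "p \<in> (\<lambda>(v, r). v # r) ` Sigma (hd ` F) ?R" by force
  qed auto
  have "(\<Sum>p\<in>F. cmod (path_weight q \<alpha> z p))
      = (\<Sum>(v, r)\<in>Sigma (hd ` F) ?R. cmod (jump_weight q \<alpha> z v) * cmod (path_weight q \<alpha> v r))"
    by (subst F_eq, subst sum.reindex) (auto simp: inj_on_def norm_mult case_prod_unfold)
  also have "\<dots> = (\<Sum>v\<in>hd ` F. cmod (jump_weight q \<alpha> z v) * (\<Sum>r\<in>?R v. cmod (path_weight q \<alpha> v r)))"
  proof -
    have "finite (?R v)" for v using assms(1) by (rule finite_vimageI) simp
    then show ?thesis using assms(1) by (subst sum.Sigma[symmetric]) (auto simp: sum_distrib_left)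
  qed
  finally show ?thesis .
qed

lemma sum_norm_path_weight_le_1:
  assumes q: "nonneg_finite_rates q" and \<alpha>: "Re \<alpha> > 0"
    and "finite F" and "F \<subseteq> entry_paths A"
  shows "(\<Sum>p\<in>F. cmod (path_weight q \<alpha> z p)) \<le> 1"
proof -
  have "(\<Sum>p\<in>F. cmod (path_weight q \<alpha> z p)) \<le> 1"
    if "finite F" "F \<subseteq> entry_paths A" "\<forall>p\<in>F. length p \<le> n" for n F z
    using that
  proof (induction n arbitrary: z F)
    case 0
    then have "F = {}" unfolding entry_paths_def by auto
    then show ?case by simp
  next
    case (Suc n)
    have tails: "(\<Sum>r\<in>Cons v -` F. cmod (path_weight q \<alpha> v r)) \<le> 1" for v
    proof (cases "v \<in> A")
      case True
      then have "Cons v -` F \<subseteq> {[]}"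
        using Suc.prems(2) by (auto simp: Cons_in_entry_paths)
      then have "Cons v -` F = {} \<or> Cons v -` F = {[]}" by (rule subset_singletonD)
      then show ?thesis by (elim disjE) simp_all
    next
      case False
      then have "Cons v -` F \<subseteq> entry_paths A"
        using Suc.prems(2) by (auto simp: Cons_in_entry_paths)
      moreover have "\<forall>r\<in>Cons v -` F. length r \<le> n" using Suc.prems(3) by auto
      moreover have "finite (Cons v -` F)" using Suc.prems(1) by (rule finite_vimageI) simp
      ultimately show ?thesis using Suc.IH by blast
    qed
    have "[] \<notin> F" using Suc.prems(2) unfolding entry_paths_def by auto
    then have "(\<Sum>p\<in>F. cmod (path_weight q \<alpha> z p))
        = (\<Sum>v\<in>hd ` F. cmod (jump_weight q \<alpha> z v) * (\<Sum>r\<in>Cons v -` F. cmod (path_weight q \<alpha> v r)))"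
      using Suc.prems(1) by (rule sum_norm_path_weight_by_first_jump[rotated])
    also have "\<dots> \<le> (\<Sum>v\<in>hd ` F. cmod (jump_weight q \<alpha> z v))"
      using tails by (intro sum_mono) (simp add: mult_left_le)
    also have "\<dots> \<le> 1" using sum_norm_jump_weight_le_1[OF q \<alpha>] Suc.prems(1) by simp
    finally show ?case .
  qed
  moreover have "\<forall>p\<in>F. length p \<le> Max (length ` F)" using assms(3) by simp
  ultimately show ?thesis using assms(3,4) by blast
qed

lemma
  assumes q: "nonneg_finite_rates q" and \<alpha>: "Re \<alpha> > 0" and S: "S \<subseteq> entry_paths A"
  shows entry_paths_norm_summable: "(\<lambda>p. cmod (path_weight q \<alpha> z p)) summable_on S"
    and entry_paths_summable: "path_weight q \<alpha> z summable_on S"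
    and infsum_norm_path_weight_le_1: "infsum (\<lambda>p. cmod (path_weight q \<alpha> z p)) S \<le> 1"
proof -
  have bound: "(\<Sum>p\<in>F. cmod (path_weight q \<alpha> z p)) \<le> 1" if "finite F" "F \<subseteq> S" for F
    using sum_norm_path_weight_le_1[OF q \<alpha>] that S by blast
  then show norm_summable: "(\<lambda>p. cmod (path_weight q \<alpha> z p)) summable_on S"
    by (auto simp: abs_summable_iff_bdd_above intro: bdd_aboveI[of _ 1])
  then show "path_weight q \<alpha> z summable_on S"
    using abs_summable_summable by blast
  show "infsum (\<lambda>p. cmod (path_weight q \<alpha> z p)) S \<le> 1"
    using norm_summable bound by (rule infsum_le_finite_sums)
qed

lemma sum_norm_hit_LT_le_1:
  assumes q: "nonneg_finite_rates q" and \<alpha>: "Re \<alpha> > 0" and "finite Y"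
  shows "(\<Sum>y\<in>Y. cmod (hit_LT q \<alpha> A z y)) \<le> 1"
proof -
  note summable = entry_paths_norm_summable[OF q \<alpha> entry_paths_to_subset]
  have "(\<Sum>y\<in>Y. cmod (hit_LT q \<alpha> A z y))
      \<le> (\<Sum>y\<in>Y. infsum (\<lambda>p. cmod (path_weight q \<alpha> z p)) (entry_paths_to A y))"
    unfolding hit_LT_eq_infsum by (intro sum_mono norm_infsum_bound summable)
  also have "\<dots> = infsum (\<lambda>p. cmod (path_weight q \<alpha> z p)) (\<Union>y\<in>Y. entry_paths_to A y)"
    using assms(3) summable by (intro sum_infsum) (auto simp: entry_paths_to_def)
  also have "\<dots> \<le> 1"
    using entry_paths_to_subset[of A] by (intro infsum_norm_path_weight_le_1[OF q \<alpha>, where A = A]) blast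
  finally show ?thesis .
qed

lemma norm_hit_LT_le_1:
  "nonneg_finite_rates q \<Longrightarrow> Re \<alpha> > 0 \<Longrightarrow> cmod (hit_LT q \<alpha> A z y) \<le> 1"
  using sum_norm_hit_LT_le_1[of q \<alpha> "{y}"] by simp

section \<open>Decomposition at the first entry into an intermediate set\<close>

text \<open>The transform of the first entry into \<open>A\<close> at a time \<open>\<ge> 0\<close>: this time is \<open>0\<close> if the chain
  starts in \<open>A\<close>.\<close>

definition hit_LT0 :: "('a \<Rightarrow> 'a \<Rightarrow> real) \<Rightarrow> complex \<Rightarrow> 'a set \<Rightarrow> 'a \<Rightarrow> 'a \<Rightarrow> complex" where
  "hit_LT0 q \<alpha> A w y = (if w \<in> A then (if w = y then 1 else 0) else hit_LT q \<alpha> A w y)"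

definition entry_paths0 :: "'a set \<Rightarrow> 'a \<Rightarrow> 'a \<Rightarrow> 'a list set" where
  "entry_paths0 A y w = (if w \<in> A then (if w = y then {[]} else {}) else entry_paths_to A y)"

lemma hit_LT0_eq_infsum: "hit_LT0 q \<alpha> A w y = infsum (path_weight q \<alpha> w) (entry_paths0 A y w)"
  unfolding entry_paths0_def hit_LT0_def by (simp add: hit_LT_eq_infsum)

definition split_at_entry :: "'a set \<Rightarrow> 'a list \<Rightarrow> ('a \<times> 'a list) \<times> 'a list" where
  "split_at_entry B p =
     (let w = hd (dropWhile (\<lambda>x. x \<notin> B) p)
      in ((w, takeWhile (\<lambda>x. x \<notin> B) p @ [w]), tl (dropWhile (\<lambda>x. x \<notin> B) p)))"

abbreviation split_paths :: "'a set \<Rightarrow> 'a set \<Rightarrow> 'a \<Rightarrow> (('a \<times> 'a list) \<times> 'a list) set" where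
  "split_paths A B y \<equiv> Sigma (Sigma B (entry_paths_to B)) (\<lambda>(w, p1). entry_paths0 A y w)"

lemma append_split_paths:
  assumes AB: "A \<subseteq> B" and w: "w \<in> B" and p1: "p1 \<in> entry_paths_to B w"
    and p2: "p2 \<in> entry_paths0 A y w"
  shows "p1 @ p2 \<in> entry_paths_to A y" and "split_at_entry B (p1 @ p2) = ((w, p1), p2)"
proof -
  have p1_eq: "p1 = butlast p1 @ [w]" and p1_out: "set (butlast p1) \<inter> B = {}"
    using p1 unfolding entry_paths_to_def by auto
  have app: "p1 @ p2 = butlast p1 @ w # p2" by (subst p1_eq) simp
  have "takeWhile (\<lambda>x. x \<notin> B) (p1 @ p2) = butlast p1"
    and "dropWhile (\<lambda>x. x \<notin> B) (p1 @ p2) = w # p2"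
    unfolding app using p1_out w by (auto simp: takeWhile_append2 dropWhile_append2 disjoint_iff)
  then show "split_at_entry B (p1 @ p2) = ((w, p1), p2)"
    unfolding split_at_entry_def using p1_eq by simp
  show "p1 @ p2 \<in> entry_paths_to A y"
  proof (cases "w \<in> A")
    case True
    then have "p2 = []" "w = y" using p2 unfolding entry_paths0_def by (auto split: if_splits)
    then show ?thesis using p1 AB True unfolding entry_paths_to_def by auto
  next
    case False
    then have p2_entry: "p2 \<in> entry_paths_to A y" using p2 unfolding entry_paths0_def by auto
    then have "butlast (p1 @ p2) = p1 @ butlast p2"
      unfolding entry_paths_to_def by (simp add: butlast_append)
    moreover have "set p1 \<inter> A = {}" using p1_out AB False by (subst p1_eq) auto
    ultimately show ?thesis using p2_entry unfolding entry_paths_to_def by auto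
  qed
qed

lemma split_at_entry_in_split_paths:
  assumes AB: "A \<subseteq> B" and p: "p \<in> entry_paths_to A y"
  shows "split_at_entry B p \<in> split_paths A B y"
    and "(\<lambda>((w, p1), p2). p1 @ p2) (split_at_entry B p) = p"
proof -
  define pre where "pre = takeWhile (\<lambda>x. x \<notin> B) p"
  define post where "post = dropWhile (\<lambda>x. x \<notin> B) p"
  have y: "y \<in> A" "last p = y" "p \<noteq> []" and p_out: "set (butlast p) \<inter> A = {}"
    using p unfolding entry_paths_to_def by auto
  then have "y \<in> set p" by auto
  then have "post \<noteq> []" unfolding post_def using y AB by auto
  then obtain w r where post_eq: "post = w # r" by (cases post) auto
  have w: "w \<in> B" using hd_dropWhile[of "\<lambda>x. x \<notin> B" p] \<open>post \<noteq> []\<close> post_eq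
    unfolding post_def by simp
  have "p = pre @ post" unfolding pre_def post_def by simp
  then have p_eq: "p = pre @ w # r" unfolding post_eq .
  have pre_out: "set pre \<inter> B = {}" unfolding pre_def by (auto dest: set_takeWhileD)
  have split_eq: "split_at_entry B p = ((w, pre @ [w]), r)"
    unfolding split_at_entry_def pre_def using post_eq[unfolded post_def] by simp
  show "(\<lambda>((w, p1), p2). p1 @ p2) (split_at_entry B p) = p" unfolding split_eq by (simp add: p_eq)
  have "pre @ [w] \<in> entry_paths_to B w" unfolding entry_paths_to_def using w pre_out by auto
  moreover have "r \<in> entry_paths0 A y w"
  proof (cases "w \<in> A")
    case True
    then have "r = []"
      using p_out unfolding p_eq by (cases r rule: rev_cases) (auto simp: butlast_append)
    then show ?thesis using True y unfolding entry_paths0_def p_eq by simp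
  next
    case False
    then have "r \<noteq> []" using y unfolding p_eq by auto
    then have "last r = y" and "set (butlast r) \<subseteq> set (butlast p)"
      using y unfolding p_eq by (auto simp: butlast_append)
    then show ?thesis
      using False \<open>r \<noteq> []\<close> y p_out unfolding entry_paths0_def entry_paths_to_def by auto
  qed
  ultimately show "split_at_entry B p \<in> split_paths A B y" unfolding split_eq using w by simp
qed

lemma bij_betw_join_split_paths:
  assumes "A \<subseteq> B"
  shows "bij_betw (\<lambda>((w, p1), p2). p1 @ p2) (split_paths A B y) (entry_paths_to A y)"
proof (rule bij_betw_byWitness[where f' = "split_at_entry B"])
  have "split_at_entry B (p1 @ p2) = ((w, p1), p2) \<and> p1 @ p2 \<in> entry_paths_to A y"
    if "((w, p1), p2) \<in> split_paths A B y" for w p1 p2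
    using append_split_paths[OF assms] that by blast
  then show "\<forall>x\<in>split_paths A B y. split_at_entry B ((\<lambda>((w, p1), p2). p1 @ p2) x) = x"
    and "(\<lambda>((w, p1), p2). p1 @ p2) ` split_paths A B y \<subseteq> entry_paths_to A y"
    by fast+
  show "\<forall>p\<in>entry_paths_to A y. (\<lambda>((w, p1), p2). p1 @ p2) (split_at_entry B p) = p"
    using split_at_entry_in_split_paths(2)[OF assms] by blast
  show "split_at_entry B ` entry_paths_to A y \<subseteq> split_paths A B y"
    using split_at_entry_in_split_paths(1)[OF assms] by blast
qed

text \<open>The strong Markov property at the first entry into \<open>B \<supseteq> A\<close>.\<close>

lemma hit_LT_split:
  assumes q: "nonneg_finite_rates q" and \<alpha>: "Re \<alpha> > 0" and AB: "A \<subseteq> B"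
  shows "hit_LT q \<alpha> A z y = (\<Sum>\<^sub>\<infinity>w\<in>B. hit_LT q \<alpha> B z w * hit_LT0 q \<alpha> A w y)"
proof -
  define f where "f = (\<lambda>(w, p1) p2. path_weight q \<alpha> z p1 * path_weight q \<alpha> w p2)"
  note bij = bij_betw_join_split_paths[OF AB, of y]
  have weight_join: "path_weight q \<alpha> z (p1 @ p2) = f (w, p1) p2"
    if "((w, p1), p2) \<in> split_paths A B y" for w p1 p2
  proof -
    have "p1 \<noteq> []" "last p1 = w" using that unfolding entry_paths_to_def by auto
    then show ?thesis unfolding f_def by (simp add: path_weight_append)
  qed
  have hit: "hit_LT q \<alpha> A z y = infsum (case_prod f) (split_paths A B y)"
    unfolding hit_LT_eq_infsum infsum_reindex_bij_betw[OF bij, symmetric]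
    by (rule infsum_cong) (auto simp: weight_join)
  have f_summable: "case_prod f summable_on split_paths A B y"
    using entry_paths_summable[OF q \<alpha> entry_paths_to_subset, of z A y]
    unfolding summable_on_reindex_bij_betw[OF bij, symmetric]
    by (rule summable_on_cong[THEN iffD1, rotated]) (auto simp: weight_join)
  have inner: "infsum (f x) (case_prod (\<lambda>w p1. entry_paths0 A y w) x)
      = case_prod (\<lambda>w p1. path_weight q \<alpha> z p1 * hit_LT0 q \<alpha> A w y) x" for x
    by (cases x) (simp add: f_def hit_LT0_eq_infsum infsum_cmult_right')
  have summable: "(\<lambda>(w, p1). path_weight q \<alpha> z p1 * hit_LT0 q \<alpha> A w y)
      summable_on Sigma B (entry_paths_to B)"
    using summable_on_Sigma_banach[OF f_summable] unfolding inner by simp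
  have "hit_LT q \<alpha> A z y
      = (\<Sum>\<^sub>\<infinity>(w, p1)\<in>Sigma B (entry_paths_to B). path_weight q \<alpha> z p1 * hit_LT0 q \<alpha> A w y)"
    using infsum_Sigma'_banach[OF f_summable] unfolding hit inner by simp
  also have "\<dots> = (\<Sum>\<^sub>\<infinity>w\<in>B. \<Sum>\<^sub>\<infinity>p1\<in>entry_paths_to B w. path_weight q \<alpha> z p1 * hit_LT0 q \<alpha> A w y)"
    using infsum_Sigma'_banach[OF summable] by simp
  also have "\<dots> = (\<Sum>\<^sub>\<infinity>w\<in>B. hit_LT q \<alpha> B z w * hit_LT0 q \<alpha> A w y)"
    by (simp add: hit_LT_eq_infsum infsum_cmult_left')
  finally show ?thesis .
qed

lemma hit_LT_UNIV: "hit_LT q \<alpha> UNIV z w = jump_weight q \<alpha> z w"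
proof -
  have "entry_paths_to UNIV w = {[w]}"
  proof (intro equalityI subsetI)
    fix p assume "p \<in> entry_paths_to UNIV w"
    then show "p \<in> {[w]}" unfolding entry_paths_to_def by (cases p rule: rev_cases) auto
  qed (simp add: entry_paths_to_def)
  then show ?thesis unfolding hit_LT_eq_infsum by simp
qed

lemma hit_LT_first_step:
  assumes "nonneg_finite_rates q" and "Re \<alpha> > 0"
  shows "hit_LT q \<alpha> A z y = (\<Sum>\<^sub>\<infinity>w. jump_weight q \<alpha> z w * hit_LT0 q \<alpha> A w y)"
  using hit_LT_split[OF assms subset_UNIV] unfolding hit_LT_UNIV .

section \<open>Chains related by an injective relabelling\<close>

text \<open>Up to its first entry into \<open>A1\<close>, the chain \<open>q1\<close> started at \<open>z\<close> moves inside \<open>P\<close>, and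
  \<open>f\<close> maps it onto the chain \<open>q2\<close> started at \<open>f z\<close> observed up to its first entry into \<open>A2\<close>.\<close>

locale chain_embedding =
  fixes q1 :: "'a \<Rightarrow> 'a \<Rightarrow> real" and q2 :: "'b \<Rightarrow> 'b \<Rightarrow> real" and f :: "'a \<Rightarrow> 'b"
    and P :: "'a set" and z :: 'a and A1 :: "'a set" and A2 :: "'b set"
  assumes inj: "inj f"
    and start: "z \<in> P"
    and rates: "\<And>u v. u \<in> P \<Longrightarrow> u = z \<or> u \<notin> A1 \<Longrightarrow> q2 (f u) (f v) = q1 u v"
    and targets_in_image: "\<And>u v'. u \<in> P \<Longrightarrow> u = z \<or> u \<notin> A1 \<Longrightarrow> q2 (f u) v' \<noteq> 0 \<Longrightarrow> v' \<in> range f"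
    and targets_in_P: "\<And>u v. u \<in> P \<Longrightarrow> u = z \<or> u \<notin> A1 \<Longrightarrow> q1 u v \<noteq> 0 \<Longrightarrow> v \<noteq> u \<Longrightarrow> v \<in> P"
    and entry_sets: "\<And>v. v \<in> P \<Longrightarrow> f v \<in> A2 \<longleftrightarrow> v \<in> A1"
begin

lemma out_rate_image:
  assumes "u \<in> P" "u = z \<or> u \<notin> A1"
  shows "out_rate q2 (f u) = out_rate q1 u"
proof -
  have "out_rate q2 (f u) = infsum (q2 (f u)) (f ` (UNIV - {u}))"
    unfolding out_rate_def
    by (rule infsum_cong_neutral) (use targets_in_image[OF assms] inj in \<open>auto simp: inj_eq\<close>)
  also have "\<dots> = infsum (q2 (f u) \<circ> f) (UNIV - {u})"
    by (rule infsum_reindex) (use inj in \<open>auto simp: inj_on_def\<close>)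
  also have "\<dots> = out_rate q1 u" unfolding out_rate_def by (simp add: o_def rates[OF assms])
  finally show ?thesis .
qed

lemma jump_weight_image:
  assumes "u \<in> P" "u = z \<or> u \<notin> A1"
  shows "jump_weight q2 \<alpha> (f u) (f v) = jump_weight q1 \<alpha> u v"
  using rates[OF assms] out_rate_image[OF assms] inj unfolding jump_weight_def by (simp add: inj_eq)

lemma path_weight_image:
  "u \<in> P \<Longrightarrow> u = z \<or> u \<notin> A1 \<Longrightarrow> set p \<subseteq> P \<Longrightarrow> set (butlast p) \<inter> A1 = {} \<Longrightarrow>
    path_weight q2 \<alpha> (f u) (map f p) = path_weight q1 \<alpha> u p"
proof (induction p arbitrary: u)
  case (Cons v r)
  have "path_weight q2 \<alpha> (f v) (map f r) = path_weight q1 \<alpha> v r"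
  proof (cases "r = []")
    case False
    then show ?thesis using Cons.IH[of v] Cons.prems by (auto simp: in_set_butlastD)
  qed simp
  then show ?case using jump_weight_image[OF Cons.prems(1,2)] by simp
qed simp

lemma path_in_P:
  "u \<in> P \<Longrightarrow> u = z \<or> u \<notin> A1 \<Longrightarrow> path_weight q1 \<alpha> u p \<noteq> 0 \<Longrightarrow> set (butlast p) \<inter> A1 = {} \<Longrightarrow>
    set p \<subseteq> P"
proof (induction p arbitrary: u)
  case (Cons v r)
  then have "jump_weight q1 \<alpha> u v \<noteq> 0" and r: "path_weight q1 \<alpha> v r \<noteq> 0" by auto
  then have v: "v \<in> P"
    using targets_in_P[OF Cons.prems(1,2)] unfolding jump_weight_def by (auto split: if_splits)
  show ?case
  proof (cases "r = []")
    case False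
    then show ?thesis using Cons.IH[of v] Cons.prems(4) v r by (auto simp: in_set_butlastD)
  qed (simp add: v)
qed simp

lemma path_in_image:
  "u \<in> P \<Longrightarrow> u = z \<or> u \<notin> A1 \<Longrightarrow> path_weight q2 \<alpha> (f u) p' \<noteq> 0 \<Longrightarrow> set (butlast p') \<inter> A2 = {} \<Longrightarrow>
    \<exists>p. p' = map f p \<and> set p \<subseteq> P"
proof (induction p' arbitrary: u)
  case (Cons v' r)
  then have "jump_weight q2 \<alpha> (f u) v' \<noteq> 0" and r: "path_weight q2 \<alpha> v' r \<noteq> 0" by auto
  then have "v' \<noteq> f u" "q2 (f u) v' \<noteq> 0" unfolding jump_weight_def by (auto split: if_splits)
  moreover obtain v where v: "v' = f v" using targets_in_image[OF Cons.prems(1,2)] calculation by auto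
  ultimately have "v \<in> P" using targets_in_P[OF Cons.prems(1,2)] rates[OF Cons.prems(1,2)] by auto
  show ?case
  proof (cases "r = []")
    case True
    then show ?thesis using \<open>v \<in> P\<close> v by (intro exI[of _ "[v]"]) simp
  next
    case False
    then have "v \<notin> A1" using Cons.prems(4) v entry_sets[OF \<open>v \<in> P\<close>] by auto
    moreover have "set (butlast r) \<inter> A2 = {}" using Cons.prems(4) False
      by (auto simp: in_set_butlastD)
    ultimately obtain p where "r = map f p" "set p \<subseteq> P"
      using Cons.IH[of v] \<open>v \<in> P\<close> r v by auto
    then show ?thesis using \<open>v \<in> P\<close> v by (intro exI[of _ "v # p"]) simp
  qed
qed simp

lemma map_in_entry_paths_to:
  assumes "set p \<subseteq> P"
  shows "map f p \<in> entry_paths_to A2 (f y) \<longleftrightarrow> p \<in> entry_paths_to A1 y"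
proof -
  have "set (butlast (map f p)) \<inter> A2 = {} \<longleftrightarrow> set (butlast p) \<inter> A1 = {}"
    using assms entry_sets by (auto simp: map_butlast[symmetric] dest: in_set_butlastD)
  moreover have "p \<noteq> [] \<Longrightarrow> last (map f p) = f y \<longleftrightarrow> last p = y"
    using inj by (simp add: last_map inj_eq)
  moreover have "p \<noteq> [] \<Longrightarrow> last p = y \<Longrightarrow> f y \<in> A2 \<longleftrightarrow> y \<in> A1"
    using assms entry_sets last_in_set by blast
  ultimately show ?thesis unfolding entry_paths_to_def by auto
qed

lemma hit_LT_image: "hit_LT q2 \<alpha> A2 (f z) (f y) = hit_LT q1 \<alpha> A1 z y"
proof -
  define S where "S = {p \<in> entry_paths_to A1 y. set p \<subseteq> P}"
  have "hit_LT q1 \<alpha> A1 z y = infsum (path_weight q1 \<alpha> z) S"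
    unfolding hit_LT_eq_infsum S_def
    by (rule infsum_cong_neutral) (use path_in_P[OF start] in \<open>auto simp: entry_paths_to_def\<close>)
  also have "\<dots> = infsum (path_weight q2 \<alpha> (f z) \<circ> map f) S"
    by (rule infsum_cong) (use path_weight_image[OF start] in \<open>auto simp: S_def entry_paths_to_def\<close>)
  also have "\<dots> = infsum (path_weight q2 \<alpha> (f z)) (map f ` S)"
    by (rule infsum_reindex[symmetric]) (use inj in \<open>simp add: inj_on_def inj_map_eq_map\<close>)
  also have "\<dots> = infsum (path_weight q2 \<alpha> (f z)) (entry_paths_to A2 (f y))"
  proof (rule infsum_cong_neutral)
    fix p' assume p': "p' \<in> entry_paths_to A2 (f y) - map f ` S"
    show "path_weight q2 \<alpha> (f z) p' = 0"
    proof (rule ccontr)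
      assume "path_weight q2 \<alpha> (f z) p' \<noteq> 0"
      moreover have "set (butlast p') \<inter> A2 = {}" using p' unfolding entry_paths_to_def by auto
      ultimately obtain p where "p' = map f p" "set p \<subseteq> P" using path_in_image[OF start] by blast
      then show False using p' map_in_entry_paths_to unfolding S_def by auto
    qed
  qed (use map_in_entry_paths_to in \<open>auto simp: S_def\<close>)
  finally show ?thesis by (simp add: hit_LT_eq_infsum)
qed

lemma hit_LT_outside_image:
  assumes "y' \<notin> f ` P"
  shows "hit_LT q2 \<alpha> A2 (f z) y' = 0"
proof -
  have "path_weight q2 \<alpha> (f z) p' = 0" if p': "p' \<in> entry_paths_to A2 y'" for p'
  proof (rule ccontr)
    assume "path_weight q2 \<alpha> (f z) p' \<noteq> 0"
    moreover have "set (butlast p') \<inter> A2 = {}" using p' unfolding entry_paths_to_def by auto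
    ultimately obtain p where p: "p' = map f p" "set p \<subseteq> P" using path_in_image[OF start] by blast
    then have "p \<noteq> []" "y' = f (last p)" using p' unfolding entry_paths_to_def by (auto simp: last_map)
    then show False using assms p(2) last_in_set by blast
  qed
  then show ?thesis unfolding hit_LT_eq_infsum by (simp add: infsum_0)
qed

end

lemma index_mult_mat_sum:
  assumes "A \<in> carrier_mat n n" "B \<in> carrier_mat n n" "i < n" "j < n"
  shows "(A * B) $$ (i, j) = (\<Sum>k<n. A $$ (i, k) * B $$ (k, j))"
  using assms by (simp add: scalar_prod_def atLeast0LessThan)

lemma pow_mat_Suc_left:
  assumes A: "A \<in> carrier_mat n n"
  shows "A ^\<^sub>m Suc k = A * A ^\<^sub>m k"
proof (induction k)
  case (Suc k)
  have "A ^\<^sub>m Suc (Suc k) = (A * A ^\<^sub>m k) * A" using Suc by simp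
  also have "\<dots> = A * (A ^\<^sub>m k * A)" using A by (simp add: assoc_mult_mat[of _ n n _ n _ n])
  finally show ?case by simp
qed (use A in simp)

lemma det_nonzero_if_strictly_diag_dominant:
  fixes M :: "complex mat"
  assumes M: "M \<in> carrier_mat n n"
    and dominant: "\<And>i. i < n \<Longrightarrow> (\<Sum>j\<in>{..<n} - {i}. cmod (M $$ (i, j))) < cmod (M $$ (i, i))"
  shows "det M \<noteq> 0"
proof
  assume "det M = 0"
  then obtain v where v: "v \<in> carrier_vec n" "v \<noteq> 0\<^sub>v n" "M *\<^sub>v v = 0\<^sub>v n"
    using det_0_iff_vec_prod_zero[OF M] by auto
  obtain j0 where j0: "j0 < n" "v $ j0 \<noteq> 0"
    using v(1,2) by (metis eq_vecI carrier_vecD index_zero_vec(1,2))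
  define m where "m = Max ((\<lambda>j. cmod (v $ j)) ` {..<n})"
  have "m \<in> (\<lambda>j. cmod (v $ j)) ` {..<n}" unfolding m_def using j0 by (intro Max_in) auto
  then obtain i where i: "i < n" "cmod (v $ i) = m" by auto
  have max: "cmod (v $ j) \<le> cmod (v $ i)" if "j < n" for j
    unfolding i(2) m_def using that by (intro Max_ge) auto
  have vi: "cmod (v $ i) > 0" using max[OF j0(1)] j0(2) by (meson norm_ge_zero order_less_le_trans zero_less_norm_iff)
  have "(\<Sum>j<n. M $$ (i, j) * v $ j) = 0"
    using arg_cong[OF v(3), of "\<lambda>w. w $ i"] M v(1) i by (simp add: scalar_prod_def atLeast0LessThan)
  then have "M $$ (i, i) * v $ i = - (\<Sum>j\<in>{..<n} - {i}. M $$ (i, j) * v $ j)"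
    using i by (simp add: sum.remove eq_neg_iff_add_eq_0)
  then have "cmod (M $$ (i, i)) * cmod (v $ i) = cmod (\<Sum>j\<in>{..<n} - {i}. M $$ (i, j) * v $ j)"
    by (metis norm_minus_cancel norm_mult)
  also have "\<dots> \<le> (\<Sum>j\<in>{..<n} - {i}. cmod (M $$ (i, j)) * cmod (v $ j))"
    by (rule order_trans[OF norm_sum]) (simp add: norm_mult)
  also have "\<dots> \<le> (\<Sum>j\<in>{..<n} - {i}. cmod (M $$ (i, j)) * cmod (v $ i))"
    by (rule sum_mono) (auto intro!: mult_left_mono max)
  also have "\<dots> < cmod (M $$ (i, i)) * cmod (v $ i)"
    using dominant[OF i(1)] vi by (simp add: sum_distrib_right[symmetric])
  finally show False by simp
qed

lemma inverts_mat_if_det_nonzero: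
  fixes M :: "'a :: field mat"
  assumes "M \<in> carrier_mat n n" and "det M \<noteq> 0"
  shows "\<exists>Minv \<in> carrier_mat n n. inverts_mat M Minv \<and> inverts_mat Minv M"
  using det_non_zero_imp_unit[OF assms, of "()"] assms(1)
  unfolding Units_def ring_mat_def inverts_mat_def by auto

lemma Xrate_eq: "Xrate c la1 la2 mu1 mu2 (i, j) v =
   (if v = (i + 1, j) then la1 else if v = (i, j + 1) then la2
    else if i \<ge> 1 \<and> v = (i - 1, j) then max (min (real i) (real c - real j)) 0 * mu1
    else if j \<ge> 1 \<and> v = (i, j - 1) then min (real c) (real j) * mu2 else 0)"
  by (simp add: Xrate_def)

lemma Xrate_nonzero:
  assumes "Xrate c la1 la2 mu1 mu2 (i, j) v \<noteq> 0"
  shows "v = (i + 1, j) \<or> v = (i, j + 1) \<or> (j \<ge> 1 \<and> v = (i, j - 1)) \<or> (1 \<le> i \<and> j < c \<and> v = (i - 1, j))"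
  using assms by (auto simp: Xrate_eq max_def min_def split: if_splits)

lemma Xrate_shift:
  assumes "c \<le> i + j"
  shows "Xrate c la1 la2 mu1 mu2 (i + n, j) (a + n, b) = Xrate c la1 la2 mu1 mu2 (i, j) (a, b)"
proof -
  have "((a + n, b) = (i + n + 1, j)) = ((a, b) = (i + 1, j))"
    and "((a + n, b) = (i + n, j + 1)) = ((a, b) = (i, j + 1))"
    and "(1 \<le> i + n \<and> (a + n, b) = (i + n - 1, j)) = (1 \<le> i \<and> (a, b) = (i - 1, j))"
    and "(1 \<le> j \<and> (a + n, b) = (i + n, j - 1)) = (1 \<le> j \<and> (a, b) = (i, j - 1))"
    by auto
  moreover have "max (min (real (i + n)) (real c - real j)) 0 = max (min (real i) (real c - real j)) 0"
    using assms by (auto simp: min_def max_def)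
  ultimately show ?thesis
    unfolding Xrate_eq[of c la1 la2 mu1 mu2 "i + n"] Xrate_eq[of c la1 la2 mu1 mu2 i] by presburger
qed

lemma MM1rate_eq: "MM1rate lam mu th (m, k) v =
   (if v = (m + 1, k) then lam else if m \<ge> 1 \<and> v = (m - 1, k) then mu
    else if v = (m, k + 1) then th else 0)"
  by (simp add: MM1rate_def)

lemma Xrate_busy_period:
  assumes "c \<ge> 1" and m: "m \<ge> 1"
  shows "Xrate c la1 la2 mu1 mu2 (c + k, c - 1 + m) (c + b, c - 1 + a) = MM1rate la2 (real c * mu2) la1 (m, k) (a, b)"
proof -
  have "((c + b, c - 1 + a) = (c + k + 1, c - 1 + m)) = ((a, b) = (m, k + 1))"
    and "((c + b, c - 1 + a) = (c + k, c - 1 + m + 1)) = ((a, b) = (m + 1, k))"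
    and "(1 \<le> c - 1 + m \<and> (c + b, c - 1 + a) = (c + k, c - 1 + m - 1)) = ((a, b) = (m - 1, k))"
    using assms by auto
  moreover have "max (min (real (c + k)) (real c - real (c - 1 + m))) 0 = 0"
    and "min (real c) (real (c - 1 + m)) = real c"
    using assms by (auto simp: min_def max_def)
  ultimately have "Xrate c la1 la2 mu1 mu2 (c + k, c - 1 + m) (c + b, c - 1 + a) =
    (if (a, b) = (m, k + 1) then la1 else if (a, b) = (m + 1, k) then la2
     else if 1 \<le> c + k \<and> (c + b, c - 1 + a) = (c + k - 1, c - 1 + m) then 0 * mu1
     else if (a, b) = (m - 1, k) then real c * mu2 else 0)"
    unfolding Xrate_eq[of c la1 la2 mu1 mu2 "c + k" "c - 1 + m"] by presburger
  also have "\<dots> = MM1rate la2 (real c * mu2) la1 (m, k) (a, b)"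
    unfolding MM1rate_eq using m by auto
  finally show ?thesis .
qed

lemma nonneg_finite_rates_Xrate:
  assumes "la1 \<ge> 0" "la2 \<ge> 0" "mu1 \<ge> 0" "mu2 \<ge> 0"
  shows "nonneg_finite_rates (Xrate c la1 la2 mu1 mu2)"
  unfolding nonneg_finite_rates_def
proof (intro conjI allI)
  fix z z' :: "nat \<times> nat"
  show "Xrate c la1 la2 mu1 mu2 z z' \<ge> 0"
    using assms by (cases z) (auto simp: Xrate_eq)
next
  fix z :: "nat \<times> nat"
  obtain i j where z: "z = (i, j)" by fastforce
  have "{z'. Xrate c la1 la2 mu1 mu2 z z' \<noteq> 0} \<subseteq> {(i + 1, j), (i, j + 1), (i - 1, j), (i, j - 1)}"
    unfolding z by (auto dest: Xrate_nonzero)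
  then show "finite {z'. Xrate c la1 la2 mu1 mu2 z z' \<noteq> 0}" by (rule finite_subset) simp
qed

lemma nonneg_finite_rates_MM1rate:
  assumes "lam \<ge> 0" "mu \<ge> 0" "th \<ge> 0"
  shows "nonneg_finite_rates (MM1rate lam mu th)"
  unfolding nonneg_finite_rates_def
proof (intro conjI allI)
  fix z z' :: "nat \<times> nat"
  show "MM1rate lam mu th z z' \<ge> 0"
    using assms by (cases z) (auto simp: MM1rate_eq)
next
  fix z :: "nat \<times> nat"
  obtain m k where z: "z = (m, k)" by fastforce
  have "{z'. MM1rate lam mu th z z' \<noteq> 0} \<subseteq> {(m + 1, k), (m - 1, k), (m, k + 1)}"
    unfolding z by (auto simp: MM1rate_eq split: if_splits)
  then show "finite {z'. MM1rate lam mu th z z' \<noteq> 0}" by (rule finite_subset) simp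
qed

lemma level_eq: "level c i = (\<lambda>j. (i, j)) ` {..<c}"
  unfolding level_def by auto

section \<open>First-passage transforms of \<open>X\<close>\<close>

locale X_chain =
  fixes c :: nat and la1 la2 mu1 mu2 :: real and \<alpha> :: complex
  assumes c_pos: "c \<ge> 1" and la1_pos: "la1 > 0" and la2_pos: "la2 > 0"
    and mu1_pos: "mu1 > 0" and mu2_pos: "mu2 > 0" and Re_\<alpha>: "Re \<alpha> > 0"
begin

abbreviation "qX \<equiv> Xrate c la1 la2 mu1 mu2"
abbreviation "L \<equiv> level c (c - 1)"
abbreviation "G \<equiv> Gmat c la1 la2 mu1 mu2 \<alpha>"
abbreviation "W m \<equiv> Wmat c la1 la2 mu2 m \<alpha>"
abbreviation "w m \<equiv> busy_w la2 (real c * mu2) la1 m \<alpha>"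

lemma nonneg_finite_rates_qX: "nonneg_finite_rates qX"
  using nonneg_finite_rates_Xrate la1_pos la2_pos mu1_pos mu2_pos by simp

definition descent :: "nat \<Rightarrow> nat \<Rightarrow> nat \<Rightarrow> complex" where
  "descent n k l = hit_LT qX \<alpha> L (c - 1 + n, k) (c - 1, l)"

lemma G_carrier: "G \<in> carrier_mat c c"
  unfolding Gmat_def by simp

lemma G_index: "k < c \<Longrightarrow> l < c \<Longrightarrow> G $$ (k, l) = descent 1 k l"
  unfolding Gmat_def descent_def using c_pos by simp

lemma chain_embedding_shift:
  assumes n: "n \<ge> 1"
  shows "chain_embedding qX qX (\<lambda>(i, j). (i + n, j)) {(i, j). i \<ge> c - 1} (c, k) L
    (level c (c - 1 + n) \<union> L)"
proof
  let ?f = "\<lambda>(i :: nat, j :: nat). (i + n, j)" and ?P = "{(i :: nat, j :: nat). i \<ge> c - 1}"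
  have active: "c \<le> i + j \<and> (i \<ge> c \<or> j \<ge> c)" if "(i, j) \<in> ?P" "(i, j) = (c, k) \<or> (i, j) \<notin> L" for i j
    using that c_pos unfolding level_def by auto
  show "inj ?f" unfolding inj_def by auto
  show "(c, k) \<in> ?P" by auto
  show "qX (?f u) (?f v) = qX u v" if "u \<in> ?P" "u = (c, k) \<or> u \<notin> L" for u v
    using active[of "fst u" "snd u"] that Xrate_shift by (cases u, cases v) auto
  show "v' \<in> range ?f" if "u \<in> ?P" "u = (c, k) \<or> u \<notin> L" "qX (?f u) v' \<noteq> 0" for u v'
  proof -
    obtain i j where u: "u = (i, j)" by fastforce
    have "fst v' \<ge> n"
      using Xrate_nonzero[OF that(3)[unfolded u, simplified]] active[OF that(1,2)[unfolded u]] by auto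
    then have "v' = ?f (fst v' - n, snd v')" by auto
    then show ?thesis by blast
  qed
  show "v \<in> ?P" if "u \<in> ?P" "u = (c, k) \<or> u \<notin> L" "qX u v \<noteq> 0" "v \<noteq> u" for u v
  proof -
    obtain i j where u: "u = (i, j)" by fastforce
    show ?thesis
      using Xrate_nonzero[OF that(3)[unfolded u]] active[OF that(1,2)[unfolded u]] that(1)
      unfolding u by auto
  qed
  show "?f v \<in> level c (c - 1 + n) \<union> L \<longleftrightarrow> v \<in> L" if "v \<in> ?P" for v
    using that n c_pos unfolding level_def by auto
qed

lemma hit_LT_shifted_level:
  assumes n: "n \<ge> 1"
  shows "hit_LT qX \<alpha> (level c (c - 1 + n) \<union> L) (c + n, k) (c - 1 + n, j) = descent 1 k j"
    and "fst v < c - 1 + n \<Longrightarrow> hit_LT qX \<alpha> (level c (c - 1 + n) \<union> L) (c + n, k) v = 0"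
proof -
  interpret chain_embedding qX qX "\<lambda>(i, j). (i + n, j)" "{(i, j). i \<ge> c - 1}" "(c, k)" L
    "level c (c - 1 + n) \<union> L"
    using n by (rule chain_embedding_shift)
  show "hit_LT qX \<alpha> (level c (c - 1 + n) \<union> L) (c + n, k) (c - 1 + n, j) = descent 1 k j"
    using hit_LT_image[of \<alpha> "(c - 1, j)"] c_pos unfolding descent_def by simp
  show "hit_LT qX \<alpha> (level c (c - 1 + n) \<union> L) (c + n, k) v = 0" if "fst v < c - 1 + n"
  proof -
    have "v \<notin> (\<lambda>(i, j). (i + n, j)) ` {(i, j). i \<ge> c - 1}" using that by auto
    then show ?thesis using hit_LT_outside_image[of v \<alpha>] by simp
  qed
qed

lemma descent_Suc:
  assumes n: "n \<ge> 1"
  shows "descent (Suc n) k l = (\<Sum>j<c. descent 1 k j * descent n j l)"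
proof -
  define B where "B = level c (c - 1 + n) \<union> L"
  have fin: "finite (level c i)" for i unfolding level_eq by simp
  have "descent (Suc n) k l = hit_LT qX \<alpha> L (c + n, k) (c - 1, l)"
    unfolding descent_def using c_pos by (simp add: add.commute)
  also have "\<dots> = (\<Sum>\<^sub>\<infinity>v\<in>B. hit_LT qX \<alpha> B (c + n, k) v * hit_LT0 qX \<alpha> L v (c - 1, l))"
    by (rule hit_LT_split[OF nonneg_finite_rates_qX Re_\<alpha>]) (simp add: B_def)
  also have "\<dots> = (\<Sum>v\<in>B. hit_LT qX \<alpha> B (c + n, k) v * hit_LT0 qX \<alpha> L v (c - 1, l))"
    using fin by (simp add: B_def)
  also have "\<dots> = (\<Sum>v\<in>level c (c - 1 + n). hit_LT qX \<alpha> B (c + n, k) v * hit_LT0 qX \<alpha> L v (c - 1, l))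
       + (\<Sum>v\<in>L. hit_LT qX \<alpha> B (c + n, k) v * hit_LT0 qX \<alpha> L v (c - 1, l))"
    unfolding B_def by (rule sum.union_disjoint) (use fin n in \<open>auto simp: level_def\<close>)
  also have "(\<Sum>v\<in>L. hit_LT qX \<alpha> B (c + n, k) v * hit_LT0 qX \<alpha> L v (c - 1, l)) = 0"
    using hit_LT_shifted_level(2)[OF n] n unfolding B_def level_def by (intro sum.neutral) auto
  also have "(\<Sum>v\<in>level c (c - 1 + n). hit_LT qX \<alpha> B (c + n, k) v * hit_LT0 qX \<alpha> L v (c - 1, l))
      = (\<Sum>j<c. hit_LT qX \<alpha> B (c + n, k) (c - 1 + n, j) * hit_LT0 qX \<alpha> L (c - 1 + n, j) (c - 1, l))"
    unfolding level_eq[of c "c - 1 + n"] by (subst sum.reindex) (auto simp: inj_on_def)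
  also have "\<dots> = (\<Sum>j<c. descent 1 k j * descent n j l)"
  proof (rule sum.cong)
    fix j
    have "(c - 1 + n, j) \<notin> L" using n unfolding level_def by auto
    then show "hit_LT qX \<alpha> B (c + n, k) (c - 1 + n, j) * hit_LT0 qX \<alpha> L (c - 1 + n, j) (c - 1, l)
        = descent 1 k j * descent n j l"
      using hit_LT_shifted_level(1)[OF n] unfolding B_def hit_LT0_def descent_def by simp
  qed simp
  finally show ?thesis by simp
qed

lemma G_pow_index:
  assumes "k < c" "l < c"
  shows "(G ^\<^sub>m Suc m) $$ (k, l) = descent (Suc m) k l"
  using assms
proof (induction m arbitrary: k l)
  case 0
  then show ?case using G_carrier G_index by simp
next
  case (Suc m)
  have "(G ^\<^sub>m Suc (Suc m)) $$ (k, l) = (G * G ^\<^sub>m Suc m) $$ (k, l)"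
    by (simp only: pow_mat_Suc_left[OF G_carrier])
  also have "\<dots> = (\<Sum>j<c. G $$ (k, j) * (G ^\<^sub>m Suc m) $$ (j, l))"
    using G_carrier Suc.prems by (intro index_mult_mat_sum) auto
  also have "\<dots> = descent (Suc (Suc m)) k l"
    using Suc descent_Suc[of "Suc m"] G_index by simp
  finally show ?case .
qed

text \<open>While the second coordinate stays above \<open>c - 1\<close>, the first coordinate cannot decrease: the
  second coordinate performs an M/M/1 queue with service rate \<open>c \<mu>\<^sub>2\<close> and the first one counts
  the \<open>\<lambda>\<^sub>1\<close>-arrivals.\<close>

lemma chain_embedding_busy_period:
  "chain_embedding (MM1rate la2 (real c * mu2) la1) qX (\<lambda>(m, k). (c + k, c - 1 + m)) UNIV (1, 0)
    {v. fst v = 0} {v. snd v < c}"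
proof
  let ?f = "\<lambda>(m :: nat, k :: nat). (c + k, c - 1 + m)"
  show "inj ?f" unfolding inj_def by auto
  show "qX (?f u) (?f v) = MM1rate la2 (real c * mu2) la1 u v" if "u = (1, 0) \<or> u \<notin> {v. fst v = 0}" for u v
  proof -
    obtain m k a b where u: "u = (m, k)" and v: "v = (a, b)" by fastforce
    have "m \<ge> 1" using that unfolding u by auto
    then show ?thesis using Xrate_busy_period[OF c_pos, of m la1 la2 mu1 mu2 k b a] unfolding u v by simp
  qed
  show "v' \<in> range ?f" if "u = (1, 0) \<or> u \<notin> {v. fst v = 0}" "qX (?f u) v' \<noteq> 0" for u v'
  proof -
    obtain m k where u: "u = (m, k)" by fastforce
    have "m \<ge> 1" using that unfolding u by auto
    then have "fst v' \<ge> c \<and> snd v' \<ge> c - 1"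
      using Xrate_nonzero[OF that(2)[unfolded u, simplified]] by auto
    then have "v' = ?f (snd v' - (c - 1), fst v' - c)" by (cases v') auto
    then show ?thesis by blast
  qed
  show "?f v \<in> {v. snd v < c} \<longleftrightarrow> v \<in> {v. fst v = 0}" for v
    using c_pos by (cases v) auto
qed simp_all

lemma hit_LT_busy_period:
  shows "hit_LT qX \<alpha> {v. snd v < c} (c, c) (c + m, c - 1) = w m"
    and "\<not> (fst v \<ge> c \<and> snd v \<ge> c - 1) \<Longrightarrow> hit_LT qX \<alpha> {v. snd v < c} (c, c) v = 0"
proof -
  interpret chain_embedding "MM1rate la2 (real c * mu2) la1" qX "\<lambda>(m, k). (c + k, c - 1 + m)" UNIV
    "(1, 0)" "{v. fst v = 0}" "{v. snd v < c}"
    by (rule chain_embedding_busy_period)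
  show "hit_LT qX \<alpha> {v. snd v < c} (c, c) (c + m, c - 1) = w m"
    using hit_LT_image[of \<alpha> "(0, m)"] c_pos unfolding busy_w_def by simp
  show "hit_LT qX \<alpha> {v. snd v < c} (c, c) v = 0" if "\<not> (fst v \<ge> c \<and> snd v \<ge> c - 1)"
  proof -
    have "v \<notin> range (\<lambda>(m, k). (c + k, c - 1 + m))" using that by auto
    then show ?thesis using hit_LT_outside_image[of v \<alpha>] c_pos by simp
  qed
qed

definition busy_term :: "nat \<Rightarrow> nat \<Rightarrow> complex" where
  "busy_term l m = w m * descent (Suc m) (c - 1) l"

lemma hit_LT_after_busy_period:
  "hit_LT qX \<alpha> L (c, c) (c - 1, l) = (\<Sum>\<^sub>\<infinity>m. busy_term l m)"
proof -
  define B where "B = {v :: nat \<times> nat. snd v < c}"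
  have "hit_LT qX \<alpha> L (c, c) (c - 1, l) = (\<Sum>\<^sub>\<infinity>v\<in>B. hit_LT qX \<alpha> B (c, c) v * hit_LT0 qX \<alpha> L v (c - 1, l))"
    by (rule hit_LT_split[OF nonneg_finite_rates_qX Re_\<alpha>]) (use c_pos in \<open>auto simp: B_def level_def\<close>)
  also have "\<dots> = (\<Sum>\<^sub>\<infinity>v\<in>range (\<lambda>m. (c + m, c - 1)). hit_LT qX \<alpha> B (c, c) v * hit_LT0 qX \<alpha> L v (c - 1, l))"
  proof (rule infsum_cong_neutral)
    fix v assume v: "v \<in> B - range (\<lambda>m. (c + m, c - 1))"
    have "\<not> (fst v \<ge> c \<and> snd v \<ge> c - 1)"
    proof
      assume "fst v \<ge> c \<and> snd v \<ge> c - 1"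
      then have "v = (c + (fst v - c), c - 1)" using v unfolding B_def by (cases v) auto
      then show False using v by blast
    qed
    then show "hit_LT qX \<alpha> B (c, c) v * hit_LT0 qX \<alpha> L v (c - 1, l) = 0"
      using hit_LT_busy_period(2) unfolding B_def by simp
  qed (use c_pos in \<open>auto simp: B_def\<close>)
  also have "\<dots> = (\<Sum>\<^sub>\<infinity>m. hit_LT qX \<alpha> B (c, c) (c + m, c - 1) * hit_LT0 qX \<alpha> L (c + m, c - 1) (c - 1, l))"
    by (subst infsum_reindex) (auto simp: inj_on_def o_def)
  also have "\<dots> = (\<Sum>\<^sub>\<infinity>m. busy_term l m)"
  proof (rule infsum_cong)
    fix m
    have "(c + m, c - 1) \<notin> L" unfolding level_def by auto
    moreover have "c - 1 + Suc m = c + m" using c_pos by simp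
    ultimately show "hit_LT qX \<alpha> B (c, c) (c + m, c - 1) * hit_LT0 qX \<alpha> L (c + m, c - 1) (c - 1, l)
        = busy_term l m"
      using hit_LT_busy_period(1) unfolding B_def hit_LT0_def busy_term_def descent_def by simp
  qed
  finally show ?thesis .
qed

lemma norm_descent_le_1: "cmod (descent n k l) \<le> 1"
  unfolding descent_def by (rule norm_hit_LT_le_1[OF nonneg_finite_rates_qX Re_\<alpha>])

lemma summable_norm_w: "summable (\<lambda>m. cmod (w m))"
proof (rule bounded_imp_summable)
  fix n
  have "(\<Sum>m\<le>n. cmod (w m))
      = (\<Sum>y\<in>Pair 0 ` {..n}. cmod (hit_LT (MM1rate la2 (real c * mu2) la1) \<alpha> {v. fst v = 0} (1, 0) y))"
    by (simp add: sum.reindex inj_on_def busy_w_def atLeast0AtMost)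
  also have "\<dots> \<le> 1"
    using la1_pos la2_pos mu2_pos
    by (intro sum_norm_hit_LT_le_1 nonneg_finite_rates_MM1rate Re_\<alpha>) auto
  finally show "(\<Sum>m\<le>n. cmod (w m)) \<le> 1" .
qed simp

lemma summable_norm_busy_term: "summable (\<lambda>m. cmod (busy_term l m))"
  by (rule summable_comparison_test'[OF summable_norm_w])
    (simp add: busy_term_def norm_mult mult_left_le norm_descent_le_1)

lemma hit_LT_after_busy_period_suminf:
  "hit_LT qX \<alpha> L (c, c) (c - 1, l) = (\<Sum>m. busy_term l m)"
proof -
  have "busy_term l summable_on UNIV"
    by (rule norm_summable_imp_summable_on[OF summable_norm_busy_term])
  then have "busy_term l sums (\<Sum>\<^sub>\<infinity>m. busy_term l m)" by (simp add: has_sum_imp_sums)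
  then show ?thesis unfolding hit_LT_after_busy_period by (simp add: sums_iff)
qed

text \<open>The guard \<open>k \<ge> 1\<close> matters: for \<open>k = 0\<close> the truncated \<open>(c, k - 1)\<close> would be \<open>(c, k)\<close>
  itself.\<close>

definition neighbours :: "nat \<Rightarrow> (nat \<times> nat) set" where
  "neighbours k = {(c + 1, k), (c, k + 1), (c - 1, k)} \<union> (if k \<ge> 1 then {(c, k - 1)} else {})"

lemma sum_neighbours:
  "(\<Sum>v\<in>neighbours k. g v) = g (c + 1, k) + g (c, k + 1) + g (c - 1, k) + (if k \<ge> 1 then g (c, k - 1) else 0)"
  using c_pos by (auto simp: neighbours_def add.assoc)

lemma Xrate_level_c:
  assumes "k < c"
  shows "qX (c, k) (c + 1, k) = la1" and "qX (c, k) (c, k + 1) = la2"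
    and "qX (c, k) (c - 1, k) = (real c - real k) * mu1"
    and "k \<ge> 1 \<Longrightarrow> qX (c, k) (c, k - 1) = real k * mu2"
proof -
  show "qX (c, k) (c + 1, k) = la1" "qX (c, k) (c, k + 1) = la2" by (simp_all add: Xrate_eq)
  have "max (min (real c) (real c - real k)) 0 = real c - real k"
    using assms by (auto simp: min_def max_def)
  moreover have "c - 1 \<noteq> c + 1" "c - 1 \<noteq> c" using c_pos by auto
  ultimately show "qX (c, k) (c - 1, k) = (real c - real k) * mu1" using c_pos by (simp add: Xrate_eq)
  show "qX (c, k) (c, k - 1) = real k * mu2" if "k \<ge> 1"
  proof -
    have "k - 1 \<noteq> k" "k - 1 \<noteq> k + 1" using that by auto
    then show ?thesis using that assms c_pos by (simp add: Xrate_eq min_def)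
  qed
qed

lemma Xrate_outside_neighbours:
  "v \<notin> neighbours k \<Longrightarrow> v \<noteq> (c, k) \<Longrightarrow> qX (c, k) v = 0"
  using Xrate_nonzero[of c la1 la2 mu1 mu2 c k v] c_pos unfolding neighbours_def
  by (auto split: if_splits)

lemma out_rate_level_c:
  assumes k: "k < c"
  shows "out_rate qX (c, k) = la1 + la2 + (real c - real k) * mu1 + real k * mu2"
proof -
  have "out_rate qX (c, k) = sum (qX (c, k)) (insert (c, k) (neighbours k) - {(c, k)})"
  proof (rule out_rate_eq_sum)
    show "finite (insert (c, k) (neighbours k))" by (simp add: neighbours_def)
    show "v \<in> insert (c, k) (neighbours k)" if "qX (c, k) v \<noteq> 0" for v
      using Xrate_outside_neighbours that by blast
  qed
  also have "insert (c, k) (neighbours k) - {(c, k)} = neighbours k"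
    using c_pos unfolding neighbours_def by auto
  finally show ?thesis
    using Xrate_level_c[OF k] unfolding sum_neighbours by auto
qed

lemma first_step_level_c:
  assumes k: "k < c" and l: "l < c"
  shows "(complex_of_real (out_rate qX (c, k)) + \<alpha>) * descent 1 k l =
     la1 * descent 2 k l + la2 * hit_LT0 qX \<alpha> L (c, k + 1) (c - 1, l)
     + (if k = l then complex_of_real ((real c - real k) * mu1) else 0)
     + (if k \<ge> 1 then complex_of_real (real k * mu2) * descent 1 (k - 1) l else 0)"
proof -
  let ?D = "complex_of_real (out_rate qX (c, k)) + \<alpha>"
  let ?h = "\<lambda>v. hit_LT0 qX \<alpha> L v (c - 1, l)"
  have "Re ?D > 0" using out_rate_nonneg[OF nonneg_finite_rates_qX] Re_\<alpha> by (simp add: add_nonneg_pos)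
  then have D: "?D \<noteq> 0" by (metis less_irrefl zero_complex.sel(1))
  have "descent 1 k l = (\<Sum>\<^sub>\<infinity>v. jump_weight qX \<alpha> (c, k) v * ?h v)"
    unfolding descent_def using c_pos hit_LT_first_step[OF nonneg_finite_rates_qX Re_\<alpha>] by simp
  also have "\<dots> = (\<Sum>v\<in>neighbours k. jump_weight qX \<alpha> (c, k) v * ?h v)"
    by (subst infsum_finite[symmetric], simp add: neighbours_def, rule infsum_cong_neutral)
      (use Xrate_outside_neighbours in \<open>auto simp: jump_weight_def neighbours_def split: if_splits\<close>)
  also have "\<dots> = (\<Sum>v\<in>neighbours k. complex_of_real (qX (c, k) v) * ?h v) / ?D"
    unfolding sum_divide_distrib
    by (rule sum.cong) (use c_pos in \<open>auto simp: jump_weight_def neighbours_def split: if_splits\<close>)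
  finally have "?D * descent 1 k l = (\<Sum>v\<in>neighbours k. complex_of_real (qX (c, k) v) * ?h v)"
    using D by simp
  moreover have "?h (c + 1, k) = descent 2 k l"
    and "?h (c - 1, k) = (if k = l then 1 else 0)"
    and "k \<ge> 1 \<Longrightarrow> ?h (c, k - 1) = descent 1 (k - 1) l"
    using c_pos k unfolding hit_LT0_def descent_def level_def by auto
  ultimately show ?thesis
    unfolding sum_neighbours using Xrate_level_c[OF k] by auto
qed

abbreviation "M \<equiv> \<alpha> \<cdot>\<^sub>m 1\<^sub>m c - A0mat c la1 la2 mu1 mu2 - W 0"
abbreviation "S \<equiv> mat c c (\<lambda>(k, n). \<Sum>l. (W (Suc l) * G ^\<^sub>m (Suc (Suc l))) $$ (k, n))"

lemma M_carrier: "M \<in> carrier_mat c c"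
  unfolding A0mat_def Wmat_def by (auto intro!: minus_carrier_mat)

lemma M_index:
  assumes k: "k < c" and j: "j < c"
  shows "M $$ (k, j) =
      (if j = k then \<alpha> + out_rate qX (c, k) - (if k = c - 1 then la2 * w 0 else 0) else 0)
     + (if j = k + 1 then - complex_of_real la2 else 0)
     + (if j = k - 1 then (if k \<ge> 1 then - complex_of_real (real k * mu2) else 0) else 0)"
  using k j by (auto simp: A0mat_def Wmat_def out_rate_level_c algebra_simps)

lemma M_mult_G_index:
  assumes k: "k < c" and l: "l < c"
  shows "(M * G) $$ (k, l) =
      (\<alpha> + out_rate qX (c, k) - (if k = c - 1 then la2 * w 0 else 0)) * descent 1 k l
     + (if k + 1 < c then - complex_of_real la2 * descent 1 (k + 1) l else 0)
     + (if k \<ge> 1 then - complex_of_real (real k * mu2) * descent 1 (k - 1) l else 0)"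
proof -
  have "(M * G) $$ (k, l) = (\<Sum>j<c. M $$ (k, j) * G $$ (j, l))"
    by (rule index_mult_mat_sum[OF M_carrier G_carrier k l])
  also have "\<dots> = (\<Sum>j<c.
        (if j = k then (\<alpha> + out_rate qX (c, k) - (if k = c - 1 then la2 * w 0 else 0)) * descent 1 j l else 0)
      + (if j = k + 1 then - complex_of_real la2 * descent 1 j l else 0)
      + (if j = k - 1 then (if k \<ge> 1 then - complex_of_real (real k * mu2) * descent 1 j l else 0) else 0))"
    by (rule sum.cong) (use k l in \<open>simp_all add: M_index G_index distrib_right\<close>)
  also have "\<dots> = (\<alpha> + out_rate qX (c, k) - (if k = c - 1 then la2 * w 0 else 0)) * descent 1 k l
     + (if k + 1 < c then - complex_of_real la2 * descent 1 (k + 1) l else 0)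
     + (if k \<ge> 1 then - complex_of_real (real k * mu2) * descent 1 (k - 1) l else 0)"
    unfolding sum.distrib using k by (simp add: sum.delta less_imp_diff_less)
  finally show ?thesis .
qed

lemma W_mult_index:
  assumes X: "X \<in> carrier_mat c c" and k: "k < c" and n: "n < c"
  shows "(W m * X) $$ (k, n) = (if k = c - 1 then la2 * w m * X $$ (c - 1, n) else 0)"
proof -
  have "(W m * X) $$ (k, n) = (\<Sum>j<c. W m $$ (k, j) * X $$ (j, n))"
    by (rule index_mult_mat_sum[OF _ X k n]) (simp add: Wmat_def)
  also have "\<dots> = (\<Sum>j<c. if j = c - 1 then (if k = c - 1 then la2 * w m * X $$ (c - 1, n) else 0) else 0)"
    by (rule sum.cong) (use k in \<open>auto simp: Wmat_def\<close>)
  also have "\<dots> = (if k = c - 1 then la2 * w m * X $$ (c - 1, n) else 0)"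
    using c_pos by (subst sum.delta) auto
  finally show ?thesis .
qed

lemma W_mult_G_pow_index:
  assumes k: "k < c" and n: "n < c"
  shows "(W (Suc l) * G ^\<^sub>m Suc (Suc l)) $$ (k, n) = (if k = c - 1 then la2 * busy_term n (Suc l) else 0)"
  unfolding W_mult_index[OF pow_carrier_mat[OF G_carrier] k n]
  using G_pow_index[of "c - 1" n "Suc l"] c_pos n by (simp add: busy_term_def)

lemma summable_busy_term_Suc: "summable (\<lambda>m. busy_term l (Suc m))"
  using summable_norm_cancel[OF summable_norm_busy_term] summable_Suc_iff by blast

lemma summable_W_mult_G_pow:
  assumes "k < c" "n < c"
  shows "summable (\<lambda>l. (W (Suc l) * G ^\<^sub>m Suc (Suc l)) $$ (k, n))"
  unfolding W_mult_G_pow_index[OF assms]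
  using summable_mult[OF summable_busy_term_Suc, of "complex_of_real la2"] by (cases "k = c - 1") auto

lemma S_index:
  assumes k: "k < c" and n: "n < c"
  shows "S $$ (k, n) = (if k = c - 1 then la2 * (\<Sum>l. busy_term n (Suc l)) else 0)"
  using k n summable_busy_term_Suc by (simp add: W_mult_G_pow_index suminf_mult del: pow_mat.simps)

lemma A1_mult_G_G_index:
  assumes k: "k < c" and n: "n < c"
  shows "(A1mat c la1 * G * G) $$ (k, n) = la1 * descent 2 k n"
proof -
  have "A1mat c la1 * G = complex_of_real la1 \<cdot>\<^sub>m G"
    unfolding A1mat_def mult_smult_assoc_mat[OF one_carrier_mat G_carrier] using G_carrier by simp
  then have "A1mat c la1 * G * G = complex_of_real la1 \<cdot>\<^sub>m (G * G)"
    using mult_smult_assoc_mat[OF G_carrier G_carrier] by simp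
  moreover have "(G * G) $$ (k, n) = descent 2 k n"
    using G_pow_index[OF k n, of 1] G_carrier by (simp add: numeral_2_eq_2)
  ultimately show ?thesis using k n G_carrier by simp
qed

lemma Am1_plus_A1_G_G_plus_S_index:
  assumes k: "k < c" and l: "l < c"
  shows "(Am1mat c mu1 + A1mat c la1 * G * G + S) $$ (k, l)
      = (if k = l then complex_of_real ((real c - real k) * mu1) else 0) + la1 * descent 2 k l
        + (if k = c - 1 then la2 * (\<Sum>m. busy_term l (Suc m)) else 0)"
proof -
  have "Am1mat c mu1 \<in> carrier_mat c c" "A1mat c la1 * G * G \<in> carrier_mat c c" "S \<in> carrier_mat c c"
    unfolding Am1mat_def A1mat_def using G_carrier by auto
  moreover have "(X + Y) $$ (k, l) = X $$ (k, l) + Y $$ (k, l)"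
    if "X \<in> carrier_mat c c" "Y \<in> carrier_mat c c" for X Y :: "complex mat"
    using that k l by simp
  ultimately have "(Am1mat c mu1 + A1mat c la1 * G * G + S) $$ (k, l)
      = Am1mat c mu1 $$ (k, l) + (A1mat c la1 * G * G) $$ (k, l) + S $$ (k, l)"
    by (simp only: add_carrier_mat)
  then show ?thesis
    using k l unfolding A1_mult_G_G_index[OF k l] S_index[OF k l] by (simp add: Am1mat_def)
qed

lemma hit_LT0_up_from_level_c:
  assumes k: "k < c"
  shows "hit_LT0 qX \<alpha> L (c, k + 1) (c - 1, l)
    = (if k + 1 < c then descent 1 (k + 1) l else w 0 * descent 1 (c - 1) l + (\<Sum>m. busy_term l (Suc m)))"
proof (cases "k + 1 < c")
  case True
  then show ?thesis using c_pos unfolding hit_LT0_def descent_def level_def by auto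
next
  case False
  then have "k + 1 = c" using k by simp
  moreover have "(\<Sum>m. busy_term l m) = busy_term l 0 + (\<Sum>m. busy_term l (Suc m))"
    using suminf_split_head[OF summable_norm_cancel[OF summable_norm_busy_term[of l]]] by simp
  ultimately show ?thesis
    using False c_pos hit_LT_after_busy_period_suminf[of l]
    unfolding hit_LT0_def level_def busy_term_def by auto
qed

lemma M_mult_G: "M * G = Am1mat c mu1 + A1mat c la1 * G * G + S"
proof (rule eq_matI)
  fix k l assume "k < dim_row (Am1mat c mu1 + A1mat c la1 * G * G + S)"
    and "l < dim_col (Am1mat c mu1 + A1mat c la1 * G * G + S)"
  then have k: "k < c" and l: "l < c" by (auto simp: Am1mat_def)
  show "(M * G) $$ (k, l) = (Am1mat c mu1 + A1mat c la1 * G * G + S) $$ (k, l)"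
    using first_step_level_c[OF k l] hit_LT0_up_from_level_c[OF k, of l] k
    unfolding M_mult_G_index[OF k l] Am1_plus_A1_G_G_plus_S_index[OF k l]
    by (auto simp: algebra_simps split: if_splits)
qed (auto simp: Am1mat_def Gmat_def Wmat_def)

lemma norm_w_le_1: "cmod (w m) \<le> 1"
  unfolding busy_w_def using la1_pos la2_pos mu2_pos
  by (intro norm_hit_LT_le_1 nonneg_finite_rates_MM1rate Re_\<alpha>) auto

text \<open>\<open>M\<close> is strictly diagonally dominant: \<open>Re \<alpha> > 0\<close> and \<open>|w\<^sub>0| \<le> 1\<close>, while the off-diagonal
  entries of row \<open>i\<close> are bounded by the rates \<open>\<lambda>\<^sub>2\<close> and \<open>i \<mu>\<^sub>2\<close> that also occur in the diagonal.\<close>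

lemma det_M_nonzero: "det M \<noteq> 0"
proof (rule det_nonzero_if_strictly_diag_dominant[OF M_carrier])
  fix i assume i: "i < c"
  let ?b = "\<lambda>j. (if j = i + 1 then la2 else 0) + (if j = i - 1 then (if i \<ge> 1 then real i * mu2 else 0) else 0)"
  have "cmod (M $$ (i, j)) \<le> ?b j" if j: "j \<in> {..<c} - {i}" for j
    using M_index[OF i, of j] j la2_pos mu2_pos by (auto simp: norm_mult)
  then have "(\<Sum>j\<in>{..<c} - {i}. cmod (M $$ (i, j))) \<le> (\<Sum>j\<in>{..<c} - {i}. ?b j)"
    by (rule sum_mono)
  also have "\<dots> = (if i + 1 \<in> {..<c} - {i} then la2 else 0)
      + (if i - 1 \<in> {..<c} - {i} then (if i \<ge> 1 then real i * mu2 else 0) else 0)"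
    unfolding sum.distrib by (simp add: sum.delta)
  also have "\<dots> \<le> (if i + 1 < c then la2 else 0) + real i * mu2"
    using la2_pos mu2_pos by auto
  finally have off_sum: "(\<Sum>j\<in>{..<c} - {i}. cmod (M $$ (i, j))) \<le> (if i + 1 < c then la2 else 0) + real i * mu2" .
  have "Re (w 0) \<le> 1" using norm_w_le_1 complex_Re_le_cmod order_trans by blast
  then have "Re (M $$ (i, i)) \<ge> Re \<alpha> + out_rate qX (c, i) - (if i = c - 1 then la2 else 0)"
    using M_index[OF i i] la2_pos by (auto simp: mult_left_le)
  moreover have "out_rate qX (c, i) \<ge> la1 + la2 + mu1 + real i * mu2"
    using out_rate_level_c[OF i] i mu1_pos by (simp add: mult_le_cancel_right1)
  ultimately have "Re (M $$ (i, i)) > (if i + 1 < c then la2 else 0) + real i * mu2"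
    using Re_\<alpha> la1_pos la2_pos mu1_pos i by (auto split: if_splits)
  then show "(\<Sum>j\<in>{..<c} - {i}. cmod (M $$ (i, j))) < cmod (M $$ (i, i))"
    using off_sum complex_Re_le_cmod[of "M $$ (i, i)"] by linarith
qed

end

theorem proposition2:
  fixes c :: nat and la1 la2 mu1 mu2 :: real and \<alpha> :: complex
  assumes "c \<ge> 1" and "la1 > 0" and "la2 > 0" and "mu1 > 0" and "mu2 > 0"
    and "Re \<alpha> > 0"
  shows "let G = Gmat c la1 la2 mu1 mu2 \<alpha>;
             W = (\<lambda>m. Wmat c la1 la2 mu2 m \<alpha>);
             M = \<alpha> \<cdot>\<^sub>m 1\<^sub>m c - A0mat c la1 la2 mu1 mu2 - W 0;
             S = mat c c (\<lambda>(k, n). \<Sum>l. (W (Suc l) * G ^\<^sub>m (Suc (Suc l))) $$ (k, n))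
         in (\<forall>k<c. \<forall>n<c. summable (\<lambda>l. (W (Suc l) * G ^\<^sub>m (Suc (Suc l))) $$ (k, n)))
          \<and> (\<exists>Minv \<in> carrier_mat c c. inverts_mat M Minv \<and> inverts_mat Minv M
               \<and> G = Minv * (Am1mat c mu1 + A1mat c la1 * G * G + S))"
proof -
  interpret X_chain c la1 la2 mu1 mu2 \<alpha> using assms by unfold_locales
  obtain Minv where Minv: "Minv \<in> carrier_mat c c" "inverts_mat M Minv" "inverts_mat Minv M"
    using inverts_mat_if_det_nonzero[OF M_carrier det_M_nonzero] by blast
  have "G = Minv * (M * G)"
    using Minv G_carrier M_carrier by (simp add: assoc_mult_mat[symmetric] inverts_mat_def)
  then have "G = Minv * (Am1mat c mu1 + A1mat c la1 * G * G + S)"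
    unfolding M_mult_G .
  then show ?thesis
    unfolding Let_def using summable_W_mult_G_pow Minv by blast
qed

end
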